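(* Let $\rho$ be an $m$-qubit density matrix, and let $\eta,\varepsilon\in\mathbb R$ and $b>0$ satisfy $\eta-\varepsilon-\frac1b>0$. Let $\mathcal C$ be a finite set of $m$-qubit pure product states such that (1) $\langle\pi|\rho|\pi\rangle\ge\eta-\varepsilon$ for all $|\pi\rangle\in\mathcal C$, and (2) $d_{\tan}(|\pi\rangle,|\pi'\rangle)\ge b$ for all distinct $|\pi\rangle,|\pi'\rangle\in\mathcal C$. Then $|\mathcal C|\le\frac{1}{\eta-\varepsilon-\frac1b}$.
   Context: For pure product states $|\pi\rangle=\bigotimes_{i=1}^m|\pi_i\rangle$ and $|\pi'\rangle=\bigotimes_{i=1}^m|\pi'_i\rangle$ (each $|\pi_i\rangle,|\pi'_i\rangle\in\mathbb{C}^2$ a unit vector), the tangent distance is $d_{\tan}(|\pi\rangle,|\pi'\rangle)=\Big(\sum_{i=1}^m\frac{1-|\langle\pi_i|\pi'_i\rangle|^2}{|\langle\pi_i|\pi'_i\rangle|^2}\Big)^{1/2}$ (a summand is $+\infty$ if $\langle\pi_i|\pi'_i\rangle=0$); equivalently, for $|\pi_{\vec z}\rangle=\bigotimes_i\frac{|0\rangle+z_i|1\rangle}{\sqrt{1+|z_i|^2}}$ it equals $\big(\sum_i|\frac{z_i-a_i}{1+z_i^*a_i}|^2\big)^{1/2}$. Distinct states are distinct up to global phase. *)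

theory Defs
  imports "HOL-Analysis.Analysis"
begin

definition density_matrix :: "nat \<Rightarrow> (nat \<Rightarrow> nat \<Rightarrow> complex) \<Rightarrow> bool" where
  "density_matrix m \<rho> \<longleftrightarrow>
     (\<forall>x<2^m. \<forall>y<2^m. \<rho> y x = cnj (\<rho> x y)) \<and>
     (\<forall>v :: nat \<Rightarrow> complex.
        0 \<le> Re (\<Sum>x<2^m. \<Sum>y<2^m. cnj (v x) * \<rho> x y * v y)) \<and>
     (\<Sum>x<2^m. \<rho> x x) = 1"

definition qubit_unit :: "complex \<times> complex \<Rightarrow> bool" where
  "qubit_unit p \<longleftrightarrow> (cmod (fst p))^2 + (cmod (snd p))^2 = 1"

definition product_state :: "nat \<Rightarrow> (complex \<times> complex) list \<Rightarrow> bool" where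
  "product_state m \<pi> \<longleftrightarrow> length \<pi> = m \<and> (\<forall>p\<in>set \<pi>. qubit_unit p)"

definition qinner :: "complex \<times> complex \<Rightarrow> complex \<times> complex \<Rightarrow> complex" where
  "qinner p q = cnj (fst p) * fst q + cnj (snd p) * snd q"

(* amplitude of the tensor product state at the basis index x in {0..<2^m};
   bit i of x selects the |0> or |1> component of the i-th factor *)
definition prod_amp :: "(complex \<times> complex) list \<Rightarrow> nat \<Rightarrow> complex" where
  "prod_amp \<pi> x = (\<Prod>i<length \<pi>. if odd (x div 2^i) then snd (\<pi> ! i) else fst (\<pi> ! i))"

definition expval :: "nat \<Rightarrow> (nat \<Rightarrow> nat \<Rightarrow> complex) \<Rightarrow> (complex \<times> complex) list \<Rightarrow> complex" where
  "expval m \<rho> \<pi> = (\<Sum>x<2^m. \<Sum>y<2^m. cnj (prod_amp \<pi> x) * \<rho> x y * prod_amp \<pi> y)"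

definition d_tan :: "(complex \<times> complex) list \<Rightarrow> (complex \<times> complex) list \<Rightarrow> ereal" where
  "d_tan \<pi> \<pi>' =
     (if \<exists>i<length \<pi>. qinner (\<pi> ! i) (\<pi>' ! i) = 0 then \<infinity>
      else ereal (sqrt (\<Sum>i<length \<pi>.
              (1 - (cmod (qinner (\<pi> ! i) (\<pi>' ! i)))^2) / (cmod (qinner (\<pi> ! i) (\<pi>' ! i)))^2)))"

end

theory Submission
  imports Defs
begin

text \<open>The amplitude vectors of the states in \<open>C\<close> are unit vectors, and by the product
  structure their overlaps are \<open>|\<langle>\<pi>|\<pi>'\<rangle>| = \<Prod>\<^sub>i |\<langle>\<pi>\<^sub>i|\<pi>'\<^sub>i\<rangle>| \<le> 1 / d_tan \<le> 1 / b\<close>.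
  A Gram-matrix (Schur test) estimate then bounds the frame operator \<open>\<Sum>\<^sub>\<pi> |\<pi>\<rangle>\<langle>\<pi>|\<close> by
  \<open>(1 + |C| / b) I\<close>. Pairing this operator inequality with \<open>\<rho>\<close>, using \<open>tr (\<rho> X) \<ge> 0\<close> for
  positive \<open>X\<close> and \<open>tr \<rho> = 1\<close>, gives \<open>|C| (\<eta> - \<epsilon>) \<le> \<Sum>\<^sub>\<pi> \<langle>\<pi>|\<rho>|\<pi>\<rangle> \<le> 1 + |C| / b\<close>.\<close>

section \<open>Positive semidefinite matrices\<close>

definition quad_form :: "nat \<Rightarrow> (nat \<Rightarrow> nat \<Rightarrow> complex) \<Rightarrow> (nat \<Rightarrow> complex) \<Rightarrow> complex" where
  "quad_form N A v = (\<Sum>x<N. \<Sum>y<N. cnj (v x) * A x y * v y)"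

definition hermitian :: "nat \<Rightarrow> (nat \<Rightarrow> nat \<Rightarrow> complex) \<Rightarrow> bool" where
  "hermitian N A \<longleftrightarrow> (\<forall>x<N. \<forall>y<N. A y x = cnj (A x y))"

definition pos_semidef :: "nat \<Rightarrow> (nat \<Rightarrow> nat \<Rightarrow> complex) \<Rightarrow> bool" where
  "pos_semidef N A \<longleftrightarrow> (\<forall>v. 0 \<le> Re (quad_form N A v))"

definition trace_mult :: "nat \<Rightarrow> (nat \<Rightarrow> nat \<Rightarrow> complex) \<Rightarrow> (nat \<Rightarrow> nat \<Rightarrow> complex) \<Rightarrow> complex" where
  "trace_mult N A B = (\<Sum>x<N. \<Sum>y<N. A x y * B y x)"

text \<open>For \<open>A n n = 0\<close> the division by zero makes \<open>schur_compl n A = A\<close>; for a positive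
  semidefinite \<open>A\<close> row and column \<open>n\<close> then vanish anyway.\<close>
definition schur_compl :: "nat \<Rightarrow> (nat \<Rightarrow> nat \<Rightarrow> complex) \<Rightarrow> nat \<Rightarrow> nat \<Rightarrow> complex" where
  "schur_compl n A x y = A x y - A x n * A n y / A n n"

lemma cnj_mult_self: "cnj z * z = complex_of_real ((cmod z)\<^sup>2)"
  by (simp add: complex_norm_square mult.commute del: of_real_power)

lemma sum_mult_unit:
  assumes "n < (N::nat)" shows "(\<Sum>y<N. f y * (if y = n then c else 0)) = f n * (c::complex)"
proof -
  have "(\<Sum>y<N. f y * (if y = n then c else 0)) = (\<Sum>y<N. if y = n then f n * c else 0)"
    by (intro sum.cong) auto
  then show ?thesis using assms by simp
qed

lemma quad_form_add_unit:
  assumes "n < N"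
  shows "quad_form N A (\<lambda>x. v x + (if x = n then t else 0)) =
    quad_form N A v + t * (\<Sum>x<N. cnj (v x) * A x n) + cnj t * (\<Sum>y<N. A n y * v y) + cnj t * t * A n n"
proof -
  have "quad_form N A (\<lambda>x. v x + (if x = n then t else 0)) =
     (\<Sum>x<N. \<Sum>y<N. cnj (v x) * A x y * v y + (cnj (v x) * A x y) * (if y = n then t else 0)
        + (A x y * v y) * (if x = n then cnj t else 0)
        + (A x y * (if y = n then t else 0)) * (if x = n then cnj t else 0))"
    unfolding quad_form_def by (intro sum.cong refl) (auto simp: algebra_simps)
  also have "\<dots> = quad_form N A v + (\<Sum>x<N. cnj (v x) * A x n * t) + (\<Sum>y<N. A n y * v y) * cnj t
        + A n n * t * cnj t"
    using assms by (simp add: sum.distrib sum_mult_unit quad_form_def sum_distrib_right[symmetric])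
  finally show ?thesis by (simp add: sum_distrib_left sum_distrib_right algebra_simps)
qed

lemma quad_form_unit: "n < N \<Longrightarrow> quad_form N A (\<lambda>x. if x = n then 1 else 0) = A n n"
  using quad_form_add_unit[of n N A "\<lambda>_. 0" 1] by (simp add: quad_form_def)

lemma hermitian_diag_real:
  assumes "hermitian N A" "n < N" shows "A n n = complex_of_real (Re (A n n))"
proof -
  have "Im (A n n) = - Im (A n n)"
    using assms unfolding hermitian_def by (metis cnj.sel(2))
  then show ?thesis by (simp add: complex_eq_iff)
qed

lemma pos_semidef_diag_nonneg: "pos_semidef N A \<Longrightarrow> n < N \<Longrightarrow> 0 \<le> Re (A n n)"
  unfolding pos_semidef_def by (metis quad_form_unit)

lemma hermitian_col_sum:
  assumes "hermitian N A" "n < N"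
  shows "(\<Sum>x<N. cnj (v x) * A x n) = cnj (\<Sum>y<N. A n y * v y)"
proof -
  have "(\<Sum>x<N. cnj (v x) * A x n) = (\<Sum>x<N. cnj (A n x * v x))"
  proof (intro sum.cong refl)
    fix x assume "x \<in> {..<N}"
    then have "A x n = cnj (A n x)" using assms unfolding hermitian_def by blast
    then show "cnj (v x) * A x n = cnj (A n x * v x)" by (simp add: mult.commute)
  qed
  then show ?thesis by simp
qed

text \<open>Testing with \<open>e\<^sub>x - k \<beta> e\<^sub>n\<close>, \<open>\<beta> = A n x\<close>, gives the value
  \<open>Re (A x x) - 2 k |\<beta>|\<^sup>2\<close>, which is negative for large \<open>k\<close> unless \<open>\<beta> = 0\<close>.\<close>
lemma pos_semidef_zero_diag_row:
  assumes herm: "hermitian N A" and psd: "pos_semidef N A"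
    and n: "n < N" and x: "x < N" and d: "A n n = 0"
  shows "A n x = 0"
proof (rule ccontr)
  define \<beta> where "\<beta> = A n x"
  assume "A n x \<noteq> 0"
  then have \<beta>: "cmod \<beta> \<noteq> 0" by (simp add: \<beta>_def)
  define k where "k = (Re (A x x) + 1) / (2 * (cmod \<beta>)\<^sup>2)"
  define t where "t = - complex_of_real k * \<beta>"
  have "quad_form N A (\<lambda>y. (if y = x then 1 else 0) + (if y = n then t else 0)) =
      A x x + t * cnj \<beta> + cnj t * \<beta>"
    using quad_form_add_unit[OF n, of A "\<lambda>y. if y = x then 1 else 0" t]
    by (simp add: hermitian_col_sum[OF herm n] quad_form_unit[OF x] sum_mult_unit[OF x]
        \<beta>_def d mult.commute[of "if _ then _ else _"])
  also have "\<dots> = A x x - complex_of_real (2 * k * (cmod \<beta>)\<^sup>2)"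
    unfolding t_def by (simp add: algebra_simps flip: complex_norm_square)
  finally have "0 \<le> Re (A x x) - 2 * k * (cmod \<beta>)\<^sup>2"
    using psd unfolding pos_semidef_def by (metis minus_complex.sel(1) Re_complex_of_real)
  also have "\<dots> = -1" using \<beta> unfolding k_def by (simp add: field_simps)
  finally show False by simp
qed

lemma hermitian_schur_compl:
  assumes "hermitian N A" "n < N" shows "hermitian N (schur_compl n A)"
  unfolding hermitian_def schur_compl_def
proof (intro allI impI)
  fix x y assume "x < N" "y < N"
  then have "A y x = cnj (A x y)" "A y n = cnj (A n y)" "A n x = cnj (A x n)"
    using assms unfolding hermitian_def by blast+
  moreover have "cnj (A n n) = A n n"
    using hermitian_diag_real[OF assms] by (metis complex_cnj_complex_of_real)
  ultimately show "A y x - A y n * A n x / A n n = cnj (A x y - A x n * A n y / A n n)"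
    by (simp add: mult.commute)
qed

lemma schur_compl_row_col_zero:
  assumes herm: "hermitian N A" and psd: "pos_semidef N A" and n: "n < N" and x: "x < N"
  shows "schur_compl n A n x = 0" "schur_compl n A x n = 0"
proof -
  have "A x n = cnj (A n x)" using herm n x unfolding hermitian_def by blast
  then have "A n x = 0 \<and> A x n = 0" if "A n n = 0"
    using pos_semidef_zero_diag_row[OF herm psd n x that] by simp
  then show "schur_compl n A n x = 0" "schur_compl n A x n = 0"
    unfolding schur_compl_def by (cases "A n n = 0"; simp)+
qed

lemma quad_form_schur_compl:
  "quad_form N (schur_compl n A) v =
    quad_form N A v - (\<Sum>x<N. cnj (v x) * A x n) * (\<Sum>y<N. A n y * v y) / A n n"
proof -
  have "quad_form N (schur_compl n A) v = (\<Sum>x<N. \<Sum>y<N.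
      cnj (v x) * A x y * v y - (cnj (v x) * A x n) * (A n y * v y) / A n n)"
    unfolding quad_form_def schur_compl_def by (simp add: algebra_simps diff_divide_distrib)
  then show ?thesis
    by (simp only: sum_subtractf sum_divide_distrib quad_form_def sum_product)
qed

lemma pos_semidef_schur_compl:
  assumes herm: "hermitian N A" and psd: "pos_semidef N A" and n: "n < N"
  shows "pos_semidef N (schur_compl n A)"
proof (cases "A n n = 0")
  case True
  then have "schur_compl n A = A" by (simp add: schur_compl_def fun_eq_iff)
  with psd show ?thesis by simp
next
  case False
  show ?thesis unfolding pos_semidef_def
  proof
    fix v
    define \<beta> where "\<beta> = (\<Sum>y<N. A n y * v y)"
    have d: "cnj (A n n) = A n n"
      using hermitian_diag_real[OF herm n] by (metis complex_cnj_complex_of_real)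
    have "quad_form N (schur_compl n A) v = quad_form N A v - cnj \<beta> * \<beta> / A n n"
      unfolding quad_form_schur_compl hermitian_col_sum[OF herm n] \<beta>_def ..
    also have "\<dots> = quad_form N A (\<lambda>x. v x + (if x = n then - \<beta> / A n n else 0))"
      unfolding quad_form_add_unit[OF n] hermitian_col_sum[OF herm n] \<beta>_def[symmetric]
      using False d by (simp add: field_simps)
    finally show "0 \<le> Re (quad_form N (schur_compl n A) v)"
      using psd unfolding pos_semidef_def by simp
  qed
qed

lemma trace_mult_schur_compl:
  assumes "hermitian N A" "n < N"
  shows "trace_mult N A Q - trace_mult N (schur_compl n A) Q = quad_form N Q (\<lambda>x. A x n) / A n n"
proof -
  have "trace_mult N A Q - trace_mult N (schur_compl n A) Q =
      (\<Sum>x<N. \<Sum>y<N. A x n * A n y / A n n * Q y x)"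
    unfolding trace_mult_def schur_compl_def sum_subtractf[symmetric]
    by (intro sum.cong refl) (simp add: algebra_simps)
  also have "\<dots> = (\<Sum>y<N. \<Sum>x<N. cnj (A y n) * Q y x * A x n) / A n n"
  proof -
    have "A n y = cnj (A y n)" if "y < N" for y
      using assms that unfolding hermitian_def by blast
    then show ?thesis unfolding sum_divide_distrib
      by (subst sum.swap) (intro sum.cong refl, simp add: algebra_simps)
  qed
  finally show ?thesis unfolding quad_form_def .
qed

lemma trace_mult_schur_compl_le:
  assumes herm: "hermitian N A" and psd: "pos_semidef N A" and psdQ: "pos_semidef N Q"
    and n: "n < N"
  shows "Re (trace_mult N (schur_compl n A) Q) \<le> Re (trace_mult N A Q)"
proof -
  have "0 \<le> Re (quad_form N Q (\<lambda>x. A x n) / complex_of_real (Re (A n n)))"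
    using psdQ pos_semidef_diag_nonneg[OF psd n]
    unfolding pos_semidef_def by (simp add: Re_divide_of_real)
  then show ?thesis
    using arg_cong[OF trace_mult_schur_compl[OF herm n, of Q], of Re]
    by (simp flip: hermitian_diag_real[OF herm n])
qed

lemma hermitian_restrict: "hermitian N A \<Longrightarrow> M \<le> N \<Longrightarrow> hermitian M A"
  unfolding hermitian_def by (meson order_less_le_trans)

lemma pos_semidef_restrict_Suc:
  assumes "pos_semidef (Suc n) A" shows "pos_semidef n A"
  unfolding pos_semidef_def
proof
  fix v
  define v' where "v' y = (if y < n then v y else (0::complex))" for y
  have "quad_form (Suc n) A v' = quad_form n A v"
    unfolding quad_form_def by (simp add: v'_def)
  then show "0 \<le> Re (quad_form n A v)" using assms unfolding pos_semidef_def by metis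
qed

text \<open>Eliminating the last row and column by a Schur complement lowers the trace and keeps
  positivity, so induction on the dimension applies.\<close>
lemma trace_mult_nonneg:
  assumes "hermitian N A" "pos_semidef N A" "pos_semidef N Q"
  shows "0 \<le> Re (trace_mult N A Q)"
  using assms
proof (induction N arbitrary: A)
  case 0
  then show ?case by (simp add: trace_mult_def)
next
  case (Suc n)
  let ?B = "schur_compl n A"
  have "0 \<le> Re (trace_mult n ?B Q)"
    using Suc hermitian_schur_compl pos_semidef_schur_compl
    by (meson hermitian_restrict lessI le_SucI order_refl pos_semidef_restrict_Suc)
  also have "trace_mult n ?B Q = trace_mult (Suc n) ?B Q"
    using schur_compl_row_col_zero[OF Suc.prems(1,2) lessI] by (simp add: trace_mult_def)
  also have "Re \<dots> \<le> Re (trace_mult (Suc n) A Q)"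
    using trace_mult_schur_compl_le[OF Suc.prems lessI] .
  finally show ?case .
qed

section \<open>Frame bounds\<close>

definition cinner :: "nat \<Rightarrow> (nat \<Rightarrow> complex) \<Rightarrow> (nat \<Rightarrow> complex) \<Rightarrow> complex" where
  "cinner N u v = (\<Sum>x<N. cnj (u x) * v x)"

definition frame_op :: "'a set \<Rightarrow> ('a \<Rightarrow> nat \<Rightarrow> complex) \<Rightarrow> nat \<Rightarrow> nat \<Rightarrow> complex" where
  "frame_op C a x y = (\<Sum>\<pi>\<in>C. a \<pi> x * cnj (a \<pi> y))"

lemma cinner_sum_left:
  "cinner N (\<lambda>x. \<Sum>\<pi>\<in>C. c \<pi> * a \<pi> x) v = (\<Sum>\<pi>\<in>C. cnj (c \<pi>) * cinner N (a \<pi>) v)"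
  unfolding cinner_def by (simp add: sum_distrib_left sum_distrib_right mult.assoc) (rule sum.swap)

lemma cinner_sum_right:
  "cinner N u (\<lambda>x. \<Sum>\<pi>\<in>C. c \<pi> * a \<pi> x) = (\<Sum>\<pi>\<in>C. c \<pi> * cinner N u (a \<pi>))"
  unfolding cinner_def by (simp add: sum_distrib_left algebra_simps) (rule sum.swap)

lemma cinner_self: "cinner N v v = complex_of_real (\<Sum>x<N. (cmod (v x))\<^sup>2)"
  unfolding cinner_def cnj_mult_self by simp

lemma cinner_cauchy_schwarz:
  "(cmod (cinner N u v))\<^sup>2 \<le> (\<Sum>x<N. (cmod (u x))\<^sup>2) * (\<Sum>x<N. (cmod (v x))\<^sup>2)"
proof -
  have "cmod (cinner N u v) \<le> (\<Sum>x<N. cmod (u x) * cmod (v x))"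
    unfolding cinner_def by (rule order_trans[OF norm_sum]) (simp add: norm_mult)
  then have "(cmod (cinner N u v))\<^sup>2 \<le> (\<Sum>x<N. cmod (u x) * cmod (v x))\<^sup>2"
    by (simp add: power_mono)
  also have "\<dots> \<le> (\<Sum>x<N. (cmod (u x))\<^sup>2) * (\<Sum>x<N. (cmod (v x))\<^sup>2)"
    by (rule Cauchy_Schwarz_ineq_sum)
  finally show ?thesis .
qed

lemma frame_synthesis_bound:
  fixes a :: "'a \<Rightarrow> nat \<Rightarrow> complex" and c :: "'a \<Rightarrow> complex" and \<delta> :: real
  assumes "finite C" "0 \<le> \<delta>"
    and unit: "\<forall>\<pi>\<in>C. cinner N (a \<pi>) (a \<pi>) = 1"
    and overlap: "\<forall>\<pi>\<in>C. \<forall>\<pi>'\<in>C. \<pi> \<noteq> \<pi>' \<longrightarrow> cmod (cinner N (a \<pi>) (a \<pi>')) \<le> \<delta>"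
  shows "(\<Sum>x<N. (cmod (\<Sum>\<pi>\<in>C. c \<pi> * a \<pi> x))\<^sup>2) \<le> (1 + card C * \<delta>) * (\<Sum>\<pi>\<in>C. (cmod (c \<pi>))\<^sup>2)"
proof -
  let ?G = "\<lambda>\<pi> \<pi>'. cnj (c \<pi>) * c \<pi>' * cinner N (a \<pi>) (a \<pi>')"
  have "complex_of_real (\<Sum>x<N. (cmod (\<Sum>\<pi>\<in>C. c \<pi> * a \<pi> x))\<^sup>2) =
      cinner N (\<lambda>x. \<Sum>\<pi>\<in>C. c \<pi> * a \<pi> x) (\<lambda>x. \<Sum>\<pi>\<in>C. c \<pi> * a \<pi> x)"
    by (rule cinner_self[symmetric])
  also have "\<dots> = (\<Sum>\<pi>\<in>C. \<Sum>\<pi>'\<in>C. ?G \<pi> \<pi>')"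
    by (simp add: cinner_sum_left cinner_sum_right sum_distrib_left mult.assoc)
  finally have "(\<Sum>x<N. (cmod (\<Sum>\<pi>\<in>C. c \<pi> * a \<pi> x))\<^sup>2) = Re (\<Sum>\<pi>\<in>C. \<Sum>\<pi>'\<in>C. ?G \<pi> \<pi>')"
    by (metis Re_complex_of_real)
  also have "\<dots> \<le> (\<Sum>\<pi>\<in>C. \<Sum>\<pi>'\<in>C. cmod (?G \<pi> \<pi>'))"
    by (rule order_trans[OF complex_Re_le_cmod order_trans[OF norm_sum sum_mono]]) (rule norm_sum)
  also have "\<dots> \<le> (\<Sum>\<pi>\<in>C. \<Sum>\<pi>'\<in>C. cmod (c \<pi>) * cmod (c \<pi>') * (of_bool (\<pi> = \<pi>') + \<delta>))"
  proof (intro sum_mono)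
    fix \<pi> \<pi>' assume "\<pi> \<in> C" "\<pi>' \<in> C"
    then have "cmod (cinner N (a \<pi>) (a \<pi>')) \<le> (if \<pi> = \<pi>' then 1 else 0) + \<delta>"
      using unit overlap \<open>0 \<le> \<delta>\<close> by auto
    then show "cmod (?G \<pi> \<pi>') \<le> cmod (c \<pi>) * cmod (c \<pi>') * (of_bool (\<pi> = \<pi>') + \<delta>)"
      unfolding norm_mult complex_mod_cnj by (intro mult_left_mono) (auto split: if_splits)
  qed
  also have "\<dots> = (\<Sum>\<pi>\<in>C. (cmod (c \<pi>))\<^sup>2) + \<delta> * (\<Sum>\<pi>\<in>C. 1 * cmod (c \<pi>))\<^sup>2"
    using \<open>finite C\<close>
  proof -
    have "(\<Sum>\<pi>'\<in>C. cmod (c \<pi>) * cmod (c \<pi>') * of_bool (\<pi> = \<pi>')) = (cmod (c \<pi>))\<^sup>2"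
      if "\<pi> \<in> C" for \<pi>
      using \<open>finite C\<close> that by (simp add: power2_eq_square of_bool_def if_distrib[of "(*) _"] cong: if_cong)
    then show ?thesis
      by (simp add: distrib_left sum.distrib sum_distrib_left power2_eq_square sum_product
          algebra_simps)
  qed
  also have "\<dots> \<le> (\<Sum>\<pi>\<in>C. (cmod (c \<pi>))\<^sup>2) + \<delta> * (card C * (\<Sum>\<pi>\<in>C. (cmod (c \<pi>))\<^sup>2))"
    using Cauchy_Schwarz_ineq_sum[where a = "\<lambda>_. 1" and I = C and b = "\<lambda>\<pi>. cmod (c \<pi>)"] \<open>0 \<le> \<delta>\<close>
    by (simp add: mult_left_mono)
  finally show ?thesis by (simp add: algebra_simps)
qed

lemma frame_analysis_bound:
  fixes a :: "'a \<Rightarrow> nat \<Rightarrow> complex" and \<delta> :: real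
  assumes "finite C" "0 \<le> \<delta>"
    and "\<forall>\<pi>\<in>C. cinner N (a \<pi>) (a \<pi>) = 1"
    and "\<forall>\<pi>\<in>C. \<forall>\<pi>'\<in>C. \<pi> \<noteq> \<pi>' \<longrightarrow> cmod (cinner N (a \<pi>) (a \<pi>')) \<le> \<delta>"
  shows "(\<Sum>\<pi>\<in>C. (cmod (cinner N (a \<pi>) v))\<^sup>2) \<le> (1 + card C * \<delta>) * (\<Sum>x<N. (cmod (v x))\<^sup>2)"
proof -
  define S where "S = (\<Sum>\<pi>\<in>C. (cmod (cinner N (a \<pi>) v))\<^sup>2)"
  define V where "V = (\<Sum>x<N. (cmod (v x))\<^sup>2)"
  define w where "w x = (\<Sum>\<pi>\<in>C. cinner N (a \<pi>) v * a \<pi> x)" for x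
  have "cinner N w v = (\<Sum>\<pi>\<in>C. cnj (cinner N (a \<pi>) v) * cinner N (a \<pi>) v)"
    unfolding w_def cinner_sum_left ..
  then have "complex_of_real S = cinner N w v"
    by (simp add: S_def cnj_mult_self)
  then have "S\<^sup>2 = (cmod (cinner N w v))\<^sup>2"
    by (metis norm_of_real power2_abs)
  also have "\<dots> \<le> (\<Sum>x<N. (cmod (w x))\<^sup>2) * V"
    unfolding V_def by (rule cinner_cauchy_schwarz)
  also have "\<dots> \<le> (1 + card C * \<delta>) * S * V"
    unfolding w_def S_def
    by (intro mult_right_mono frame_synthesis_bound[OF assms]) (simp add: V_def sum_nonneg)
  finally have "S * S \<le> S * ((1 + card C * \<delta>) * V)"
    by (simp add: power2_eq_square algebra_simps)
  moreover have "0 \<le> (1 + card C * \<delta>) * V"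
    using \<open>0 \<le> \<delta>\<close> unfolding V_def by (simp add: sum_nonneg)
  moreover have "0 \<le> S" unfolding S_def by (simp add: sum_nonneg)
  ultimately have "S \<le> (1 + card C * \<delta>) * V"
    by (cases "S = 0") (simp_all add: mult_le_cancel_left_pos)
  then show ?thesis unfolding S_def V_def .
qed

lemma quad_form_diff: "quad_form N (\<lambda>x y. A x y - B x y) v = quad_form N A v - quad_form N B v"
  unfolding quad_form_def by (simp add: algebra_simps sum_subtractf)

lemma quad_form_scalar_id: "quad_form N (\<lambda>x y. c * of_bool (x = y)) v = c * cinner N v v"
  unfolding quad_form_def cinner_def
  by (simp add: sum_distrib_left of_bool_def if_distrib[of "(*) _"] algebra_simps cong: if_cong)

lemma quad_form_frame_op:
  "quad_form N (frame_op C a) v = (\<Sum>\<pi>\<in>C. complex_of_real ((cmod (cinner N (a \<pi>) v))\<^sup>2))"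
proof -
  have "quad_form N (frame_op C a) v =
      (\<Sum>x<N. \<Sum>y<N. \<Sum>\<pi>\<in>C. (cnj (v x) * a \<pi> x) * (cnj (a \<pi> y) * v y))"
    unfolding quad_form_def frame_op_def by (simp add: sum_distrib_left sum_distrib_right algebra_simps)
  also have "\<dots> = (\<Sum>\<pi>\<in>C. \<Sum>x<N. \<Sum>y<N. (cnj (v x) * a \<pi> x) * (cnj (a \<pi> y) * v y))"
    by (subst sum.swap) (simp only: sum.swap[of _ "{..<N}" C])
  also have "\<dots> = (\<Sum>\<pi>\<in>C. cnj (cinner N (a \<pi>) v) * cinner N (a \<pi>) v)"
    unfolding sum_product[symmetric] cinner_def by (simp add: mult.commute)
  finally show ?thesis by (simp add: cnj_mult_self)
qed

lemma trace_mult_diff: "trace_mult N A (\<lambda>x y. B x y - B' x y) = trace_mult N A B - trace_mult N A B'"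
  unfolding trace_mult_def by (simp add: algebra_simps sum_subtractf)

lemma trace_mult_scalar_id: "trace_mult N A (\<lambda>x y. c * of_bool (x = y)) = c * (\<Sum>x<N. A x x)"
  unfolding trace_mult_def
  by (simp add: sum_distrib_left of_bool_def if_distrib[of "(*) _"] algebra_simps cong: if_cong)

lemma trace_mult_frame_op: "trace_mult N A (frame_op C a) = (\<Sum>\<pi>\<in>C. quad_form N A (a \<pi>))"
proof -
  have "trace_mult N A (frame_op C a) = (\<Sum>x<N. \<Sum>y<N. \<Sum>\<pi>\<in>C. cnj (a \<pi> x) * A x y * a \<pi> y)"
    unfolding trace_mult_def frame_op_def by (simp add: sum_distrib_left algebra_simps)
  also have "\<dots> = (\<Sum>\<pi>\<in>C. \<Sum>x<N. \<Sum>y<N. cnj (a \<pi> x) * A x y * a \<pi> y)"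
    by (subst sum.swap) (simp only: sum.swap[of _ "{..<N}" C])
  finally show ?thesis unfolding quad_form_def .
qed

lemma sum_expectation_le_frame_bound:
  fixes a :: "'a \<Rightarrow> nat \<Rightarrow> complex" and \<delta> :: real
  assumes "hermitian N \<rho>" "pos_semidef N \<rho>" and trace: "(\<Sum>x<N. \<rho> x x) = 1"
    and frame: "finite C" "0 \<le> \<delta>"
      "\<forall>\<pi>\<in>C. cinner N (a \<pi>) (a \<pi>) = 1"
      "\<forall>\<pi>\<in>C. \<forall>\<pi>'\<in>C. \<pi> \<noteq> \<pi>' \<longrightarrow> cmod (cinner N (a \<pi>) (a \<pi>')) \<le> \<delta>"
  shows "(\<Sum>\<pi>\<in>C. Re (quad_form N \<rho> (a \<pi>))) \<le> 1 + card C * \<delta>"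
proof -
  define L where "L = 1 + card C * \<delta>"
  define Q where "Q x y = complex_of_real L * of_bool (x = y) - frame_op C a x y" for x y
  have "pos_semidef N Q"
    unfolding pos_semidef_def
  proof
    fix v
    have "Re (quad_form N Q v) =
        L * (\<Sum>x<N. (cmod (v x))\<^sup>2) - (\<Sum>\<pi>\<in>C. (cmod (cinner N (a \<pi>) v))\<^sup>2)"
      unfolding Q_def quad_form_diff quad_form_scalar_id quad_form_frame_op
      by (simp add: Re_sum cinner_self)
    then show "0 \<le> Re (quad_form N Q v)"
      using frame_analysis_bound[OF frame, of v] unfolding L_def by simp
  qed
  then have "0 \<le> Re (trace_mult N \<rho> Q)"
    using assms(1,2) by (rule trace_mult_nonneg[rotated 2])
  also have "trace_mult N \<rho> Q = complex_of_real L - (\<Sum>\<pi>\<in>C. quad_form N \<rho> (a \<pi>))"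
    unfolding Q_def trace_mult_diff trace_mult_scalar_id trace_mult_frame_op trace by simp
  finally show ?thesis unfolding L_def by (simp add: Re_sum)
qed

section \<open>Product states\<close>

lemma prod_amp_Cons: "prod_amp (p # \<pi>) x = (if odd x then snd p else fst p) * prod_amp \<pi> (x div 2)"
proof -
  have "(\<Prod>i<length \<pi>. if odd (x div 2 ^ Suc i) then snd ((p # \<pi>) ! Suc i) else fst ((p # \<pi>) ! Suc i))
      = (\<Prod>i<length \<pi>. if odd (x div 2 div 2 ^ i) then snd (\<pi> ! i) else fst (\<pi> ! i))"
    by (intro prod.cong refl) (simp add: div_mult2_eq)
  then show ?thesis unfolding prod_amp_def length_Cons prod.lessThan_Suc_shift by simp
qed

lemma sum_lessThan_double: "(\<Sum>x<2 * M. f x) = (\<Sum>x<M. f (2 * x) + f (2 * x + 1 :: nat))"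
  by (induction M) (simp_all add: sum.distrib ac_simps)

lemma cinner_prod_amp:
  "length \<pi>' = length \<pi> \<Longrightarrow>
    cinner (2 ^ length \<pi>) (prod_amp \<pi>) (prod_amp \<pi>') = (\<Prod>i<length \<pi>. qinner (\<pi> ! i) (\<pi>' ! i))"
proof (induction \<pi> arbitrary: \<pi>')
  case Nil
  then show ?case by (simp add: cinner_def prod_amp_def)
next
  case (Cons p \<pi>)
  then obtain q \<sigma> where \<pi>': "\<pi>' = q # \<sigma>" "length \<sigma> = length \<pi>"
    by (cases \<pi>') auto
  have "cinner (2 ^ length (p # \<pi>)) (prod_amp (p # \<pi>)) (prod_amp \<pi>') =
      qinner p q * cinner (2 ^ length \<pi>) (prod_amp \<pi>) (prod_amp \<sigma>)"
    unfolding \<pi>'(1) cinner_def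
    by (simp add: sum_lessThan_double prod_amp_Cons qinner_def sum_distrib_left algebra_simps)
  then show ?case
    unfolding Cons.IH[OF \<pi>'(2)] \<pi>'(1) length_Cons prod.lessThan_Suc_shift by simp
qed

lemma qinner_self: "qubit_unit p \<Longrightarrow> qinner p p = 1"
  unfolding qubit_unit_def qinner_def cnj_mult_self by (metis of_real_1 of_real_add)

lemma norm_qinner_le_1:
  assumes "qubit_unit p" "qubit_unit q" shows "cmod (qinner p q) \<le> 1"
proof -
  have "cmod (qinner p q) \<le> cmod (fst p) * cmod (fst q) + cmod (snd p) * cmod (snd q)"
    unfolding qinner_def by (rule order_trans[OF norm_triangle_ineq]) (simp add: norm_mult)
  also have "\<dots> \<le> ((cmod (fst p))\<^sup>2 + (cmod (fst q))\<^sup>2) / 2 + ((cmod (snd p))\<^sup>2 + (cmod (snd q))\<^sup>2) / 2"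
    using sum_squares_bound[of "cmod (fst p)" "cmod (fst q)"] sum_squares_bound[of "cmod (snd p)" "cmod (snd q)"]
    unfolding mult.assoc by (simp add: field_simps)
  also have "\<dots> = 1" using assms unfolding qubit_unit_def by (simp add: add_divide_distrib)
  finally show ?thesis .
qed

text \<open>With \<open>c\<^sub>i = |\<langle>\<pi>\<^sub>i|\<pi>'\<^sub>i\<rangle>|\<close> the summands of \<open>d_tan\<^sup>2\<close> are \<open>u\<^sub>i = c\<^sub>i\<^sup>-\<^sup>2 - 1 \<ge> 0\<close>, and
  \<open>\<Sum>\<^sub>i u\<^sub>i \<le> \<Prod>\<^sub>i (1 + u\<^sub>i) = (\<Prod>\<^sub>i c\<^sub>i)\<^sup>-\<^sup>2\<close>.\<close>
lemma norm_prod_qinner_le: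
  fixes b :: real
  assumes unit: "\<forall>p\<in>set \<pi>. qubit_unit p" "\<forall>p\<in>set \<pi>'. qubit_unit p"
    and len: "length \<pi>' = length \<pi>" and b: "b > 0" and dist: "d_tan \<pi> \<pi>' \<ge> ereal b"
  shows "cmod (\<Prod>i<length \<pi>. qinner (\<pi> ! i) (\<pi>' ! i)) \<le> 1 / b"
proof -
  define n where "n = length \<pi>"
  define c where "c i = cmod (qinner (\<pi> ! i) (\<pi>' ! i))" for i
  have norm_prod: "cmod (\<Prod>i<n. qinner (\<pi> ! i) (\<pi>' ! i)) = (\<Prod>i<n. c i)"
    unfolding c_def by (simp add: prod_norm)
  show ?thesis
  proof (cases "\<exists>i<n. c i = 0")
    case True
    then have "cmod (\<Prod>i<n. qinner (\<pi> ! i) (\<pi>' ! i)) = 0"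
      unfolding norm_prod by (meson finite_lessThan lessThan_iff prod_zero)
    then show ?thesis using b unfolding n_def by (metis divide_pos_pos less_imp_le zero_less_one)
  next
    case False
    then have c_pos: "0 < c i" if "i < n" for i
      using that unfolding c_def by auto
    have c_le: "c i \<le> 1" if "i < n" for i
      unfolding c_def using unit len that n_def by (intro norm_qinner_le_1) auto
    define U where "U = (\<Sum>i<n. (1 - (c i)\<^sup>2) / (c i)\<^sup>2)"
    define P where "P = (\<Prod>i<n. c i)"
    have "d_tan \<pi> \<pi>' = ereal (sqrt U)"
      using False unfolding d_tan_def U_def c_def n_def by auto
    then have "b \<le> sqrt U" using dist by simp
    moreover have "0 \<le> U"
      using b \<open>b \<le> sqrt U\<close> by (metis less_le_trans real_sqrt_gt_0_iff less_imp_le)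
    ultimately have "b\<^sup>2 \<le> U"
      using b by (metis less_imp_le power_mono real_sqrt_pow2)
    also have "U \<le> (\<Prod>i<n. 1 + (1 - (c i)\<^sup>2) / (c i)\<^sup>2)"
      unfolding U_def by (intro sum_le_prod) (simp add: c_pos c_le less_imp_le power_le_one)
    also have "\<dots> = (\<Prod>i<n. 1 / (c i)\<^sup>2)"
    proof (intro prod.cong refl)
      fix i assume "i \<in> {..<n}"
      then have "c i \<noteq> 0" using c_pos by fastforce
      then show "1 + (1 - (c i)\<^sup>2) / (c i)\<^sup>2 = 1 / (c i)\<^sup>2" by (simp add: field_simps)
    qed
    also have "\<dots> = 1 / P\<^sup>2"
      unfolding P_def by (simp add: prod_dividef prod_power_distrib)
    finally have "b\<^sup>2 \<le> 1 / P\<^sup>2" .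
    moreover have "0 < P" unfolding P_def using c_pos by (intro prod_pos) auto
    ultimately have "(b * P)\<^sup>2 \<le> 1\<^sup>2"
      by (simp add: power_mult_distrib le_divide_eq)
    then have "b * P \<le> 1"
      by (rule power2_le_imp_le) simp
    then show ?thesis using b norm_prod unfolding n_def[symmetric] P_def[symmetric] by (simp add: field_simps)
  qed
qed

lemma product_state_cinner_self:
  assumes "product_state m \<pi>" shows "cinner (2 ^ m) (prod_amp \<pi>) (prod_amp \<pi>) = 1"
  using assms cinner_prod_amp[of \<pi> \<pi>] unfolding product_state_def by (simp add: qinner_self)

lemma product_state_overlap_le:
  assumes "product_state m \<pi>" "product_state m \<pi>'" "b > 0" "d_tan \<pi> \<pi>' \<ge> ereal b"
  shows "cmod (cinner (2 ^ m) (prod_amp \<pi>) (prod_amp \<pi>')) \<le> 1 / b"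
  using assms cinner_prod_amp[of \<pi>' \<pi>] norm_prod_qinner_le[of \<pi> \<pi>' b]
  unfolding product_state_def by simp

lemma density_matrix_iff:
  "density_matrix m \<rho> \<longleftrightarrow>
    hermitian (2 ^ m) \<rho> \<and> pos_semidef (2 ^ m) \<rho> \<and> (\<Sum>x<2 ^ m. \<rho> x x) = 1"
  unfolding density_matrix_def hermitian_def pos_semidef_def quad_form_def ..

lemma expval_eq_quad_form: "expval m \<rho> \<pi> = quad_form (2 ^ m) \<rho> (prod_amp \<pi>)"
  unfolding expval_def quad_form_def ..

theorem claim5p3:
  fixes m :: nat and \<rho> :: "nat \<Rightarrow> nat \<Rightarrow> complex"
    and \<eta> \<epsilon> b :: real and C :: "(complex \<times> complex) list set"
  assumes "density_matrix m \<rho>"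
    and "b > 0" and "\<eta> - \<epsilon> - 1 / b > 0"
    and "finite C" and "\<forall>\<pi>\<in>C. product_state m \<pi>"
    and "\<forall>\<pi>\<in>C. Re (expval m \<rho> \<pi>) \<ge> \<eta> - \<epsilon>"
    and "\<forall>\<pi>\<in>C. \<forall>\<pi>'\<in>C. \<pi> \<noteq> \<pi>' \<longrightarrow> d_tan \<pi> \<pi>' \<ge> ereal b"
  shows "real (card C) \<le> 1 / (\<eta> - \<epsilon> - 1 / b)"
proof -
  have "(\<Sum>\<pi>\<in>C. Re (expval m \<rho> \<pi>)) \<le> 1 + card C * (1 / b)"
    unfolding expval_eq_quad_form
    using assms(1,2,4,5,7)
    by (intro sum_expectation_le_frame_bound)
      (auto simp: density_matrix_iff product_state_cinner_self product_state_overlap_le)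
  moreover have "card C * (\<eta> - \<epsilon>) \<le> (\<Sum>\<pi>\<in>C. Re (expval m \<rho> \<pi>))"
    using sum_mono[of C "\<lambda>_. \<eta> - \<epsilon>"] assms(6) by simp
  ultimately have "card C * (\<eta> - \<epsilon> - 1 / b) \<le> 1"
    by (simp add: algebra_simps)
  then show ?thesis using assms(3) by (simp add: pos_le_divide_eq)
qed

end
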